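(* Let $\mathcal G$ be a competing content creation game with $\beta>0$ and $1\le K\le n$. For every $s=(s_1,\dots,s_n)\in\mathcal S$ and every $i\in[n]$, $$W(s)-W(s_{-i})\le c(\beta,K)^{-1}\,u_i(s_i;s_{-i}),$$ where $c(\beta,K)=\dfrac{(b+1)\log(b+K)}{(b+K)(\log(b+K)-\log K)}$ and $b=e^{1/\beta}-1$.
   Context: A competing content creation game has users $\mathcal X=\{x_1,\dots,x_m\}\subset\mathbb R^d$, players $i\in[n]$ with action sets $\mathcal S_i\subset\mathbb R^d$, relevance $\sigma:\mathbb R^d\times\mathbb R^d\to[0,1]$, noise parameter $\beta>0$, integer $1\le K\le n$; $\mathcal S=\prod_i\mathcal S_i$. For a finite multiset $S$ of strategies with $|S|\ge K$ and user $x_j$, $\mathcal T_j(S;K)$ is a sub-multiset of $K$ elements of $S$ with the largest $\sigma(\cdot,x_j)$ (ties broken uniformly at random); if $|S|=K-1$, $\mathcal T_j(S;K)=S\cup\{\bar s\}$ with a default item $\bar s$ satisfying $\sigma(\bar s,x)=0$ for all $x$. Let the noises $\varepsilon$ be i.i.d. Gumbel of location $-\beta\gamma$ and scale $\beta$ (CDF $t\mapsto\exp(-e^{-(t+\beta\gamma)/\beta})$, $\gamma$ the Euler–Mascheroni constant). User $j$ chooses the item of $\mathcal T_j$ maximizing $\sigma(\cdot,x_j)+\varepsilon$; $x_j\to s_i$ denotes that player $i$'s item is chosen. The welfare of a multiset $S$ is $W(S)=\sum_j\mathbb E[\max_{s\in\mathcal T_j(S;K)}\{\sigma(s,x_j)+\varepsilon_s\}]$;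 $W(s)$ is this for $S=\{s_1,\dots,s_n\}$ and $W(s_{-i})$ for the multiset of the other $n-1$ strategies. Player $i$'s utility is $u_i(s)=u_i(s_i;s_{-i})=\sum_j\mathbb E[\sigma(s_i,x_j)+\varepsilon_i\mid x_j\to s_i]\Pr[x_j\to s_i]$. *)

theory Defs
  imports "HOL-Probability.Probability"
begin

(* Gumbel distribution with location -beta*gamma and scale beta:
   CDF t |-> exp(-exp(-(t + beta*gamma)/beta)); we give it by its density. *)
definition gumbel_pdf :: "real \<Rightarrow> real \<Rightarrow> real" where
  "gumbel_pdf \<beta> t =
     (let z = (t + \<beta> * euler_mascheroni) / \<beta> in exp (- z - exp (- z)) / \<beta>)"

definition gumbel :: "real \<Rightarrow> real measure" where
  "gumbel \<beta> = density lborel (\<lambda>t. ennreal (gumbel_pdf \<beta> t))"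

definition noise :: "real \<Rightarrow> nat set \<Rightarrow> (nat \<Rightarrow> real) measure" where
  "noise \<beta> J = PiM J (\<lambda>_. gumbel \<beta>)"

(* Possible realisations of the top-K slate T_j for items indexed by the finite set I
   with relevances v (for the user under consideration); dflt is the index of the
   default item (not in I).  If |I| >= K: all K-subsets consisting of items with largest
   relevance; uniform choice among them = uniform tie breaking.  If |I| = K-1
   (the only other case that occurs): I together with the default item. *)
definition top_slates :: "nat \<Rightarrow> nat set \<Rightarrow> (nat \<Rightarrow> real) \<Rightarrow> nat \<Rightarrow> nat set set" where
  "top_slates K I v dflt =
     (if K \<le> card I then
        {A. A \<subseteq> I \<and> card A = K \<and> (\<forall>a\<in>A. \<forall>b\<in>I - A. v b \<le> v a)}
      else {insert dflt I})"

definition user_welfare :: "real \<Rightarrow> nat \<Rightarrow> nat set \<Rightarrow> (nat \<Rightarrow> real) \<Rightarrow> nat \<Rightarrow> real" where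
  "user_welfare \<beta> K I v dflt =
     measure_pmf.expectation (pmf_of_set (top_slates K I v dflt))
       (\<lambda>A. \<integral>\<omega>. Max ((\<lambda>t. v t + \<omega> t) ` A) \<partial>(noise \<beta> (insert dflt I)))"

definition chooses :: "nat set \<Rightarrow> (nat \<Rightarrow> real) \<Rightarrow> (nat \<Rightarrow> real) \<Rightarrow> nat \<Rightarrow> bool" where
  "chooses A v \<omega> i \<longleftrightarrow> i \<in> A \<and> (\<forall>t\<in>A - {i}. v t + \<omega> t < v i + \<omega> i)"

(* E[ sigma_i + eps_i | x_j -> s_i ] * Pr[x_j -> s_i] = E[ (sigma_i + eps_i) * 1{x_j -> s_i} ] *)
definition user_util :: "real \<Rightarrow> nat \<Rightarrow> nat set \<Rightarrow> (nat \<Rightarrow> real) \<Rightarrow> nat \<Rightarrow> nat \<Rightarrow> real" where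
  "user_util \<beta> K I v dflt i =
     measure_pmf.expectation (pmf_of_set (top_slates K I v dflt))
       (\<lambda>A. \<integral>\<omega>. (v i + \<omega> i) * (if chooses A v \<omega> i then 1 else 0)
              \<partial>(noise \<beta> (insert dflt I)))"

(* Game: m users x 0..x (m-1), n players 0..n-1 with strategies s 0..s (n-1);
   item index n is the default item with relevance 0. *)
definition relv :: "('x \<Rightarrow> 'x \<Rightarrow> real) \<Rightarrow> nat \<Rightarrow> (nat \<Rightarrow> 'x) \<Rightarrow> 'x \<Rightarrow> nat \<Rightarrow> real" where
  "relv \<sigma> n s xj t = (if t < n then \<sigma> (s t) xj else 0)"

(* welfare of the multiset {s k | k in I}, I subset of players *)
definition welfare :: "('x \<Rightarrow> 'x \<Rightarrow> real) \<Rightarrow> real \<Rightarrow> nat \<Rightarrow> nat \<Rightarrow> (nat \<Rightarrow> 'x) \<Rightarrow> nat \<Rightarrow> (nat \<Rightarrow> 'x) \<Rightarrow> nat set \<Rightarrow> real" where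
  "welfare \<sigma> \<beta> K m x n s I = (\<Sum>j<m. user_welfare \<beta> K I (relv \<sigma> n s (x j)) n)"

definition utility :: "('x \<Rightarrow> 'x \<Rightarrow> real) \<Rightarrow> real \<Rightarrow> nat \<Rightarrow> nat \<Rightarrow> (nat \<Rightarrow> 'x) \<Rightarrow> nat \<Rightarrow> (nat \<Rightarrow> 'x) \<Rightarrow> nat \<Rightarrow> real" where
  "utility \<sigma> \<beta> K m x n s i = (\<Sum>j<m. user_util \<beta> K {..<n} (relv \<sigma> n s (x j)) n i)"

definition c_const :: "real \<Rightarrow> nat \<Rightarrow> real" where
  "c_const \<beta> K = (let b = exp (1 / \<beta>) - 1 in
     (b + 1) * ln (b + real K) / ((b + real K) * (ln (b + real K) - ln (real K))))"

end

theory Submission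
  imports Defs "HOL-Real_Asymp.Real_Asymp"
begin

text \<open>
  Fix a user with relevances \<open>v\<close> and write \<open>W(A) = (\<Sum>t\<in>A. exp (v t / \<beta>))\<close> for a slate \<open>A\<close>.
  With i.i.d. Gumbel noise the user's choice follows the multinomial logit model: item \<open>k\<close>
  is chosen with probability \<open>exp (v k / \<beta>) / W(A)\<close>, the chosen value is distributed as
  \<open>\<beta> ln W(A) + \<epsilon>\<close> independently of which item was chosen, and hence the user's expected
  welfare is \<open>\<beta> ln W(A) + \<mu>\<close>, where \<open>\<mu> \<ge> 0\<close> is the mean of the noise.

  Removing player \<open>i\<close> from a top-\<open>K\<close> slate \<open>A \<ni> i\<close> costs at most \<open>a - 1\<close> in weight, with
  \<open>a = exp (v i / \<beta>) \<in> [1, e\<^sup>1\<^sup>/\<^sup>\<beta>]\<close>: the best remaining item, or the default item, has weight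
  at least \<open>1\<close>. So with \<open>S = W(A)\<close> and \<open>r = S - a + 1 \<ge> K\<close> the welfare loss is at most
  \<open>\<beta> (ln S - ln r)\<close>, while player \<open>i\<close> earns \<open>(a / S) (\<beta> ln S + \<mu>) \<ge> c_ratio a r \<cdot> \<beta> (ln S - ln r)\<close>.
  As \<open>c_ratio\<close> is decreasing in \<open>a\<close> and increasing in \<open>r\<close>, \<open>c_ratio a r \<ge> c_ratio (e\<^sup>1\<^sup>/\<^sup>\<beta>) K = c(\<beta>, K)\<close>.
  Averaging over the tie-breaking and summing over the users gives the theorem.
\<close>

section \<open>The Gumbel distribution\<close>

definition gumbel_cdf :: "real \<Rightarrow> real \<Rightarrow> real" where
  "gumbel_cdf \<beta> c = exp (- exp (- ((c + \<beta> * euler_mascheroni) / \<beta>)))"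

lemma gumbel_pdf_eq: "gumbel_pdf \<beta> t = exp (- ((t + \<beta> * euler_mascheroni) / \<beta>)) * gumbel_cdf \<beta> t / \<beta>"
proof -
  have "exp (- z - exp (- z)) = exp (- z) * exp (- exp (- z))" for z :: real
    by (simp flip: exp_add)
  then show ?thesis unfolding gumbel_cdf_def gumbel_pdf_def Let_def by simp
qed

lemma gumbel_pdf_nonneg: "\<beta> > 0 \<Longrightarrow> 0 \<le> gumbel_pdf \<beta> t"
  unfolding gumbel_pdf_def Let_def by simp

lemma borel_measurable_gumbel_pdf[measurable]: "gumbel_pdf \<beta> \<in> borel_measurable borel"
  unfolding gumbel_pdf_def[abs_def] Let_def by measurable

lemma borel_measurable_gumbel_cdf[measurable]: "gumbel_cdf \<beta> \<in> borel_measurable borel"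
  unfolding gumbel_cdf_def[abs_def] by measurable

lemma gumbel_cdf_nonneg: "0 \<le> gumbel_cdf \<beta> c"
  by (simp add: gumbel_cdf_def)

lemma gumbel_cdf_has_real_derivative:
  assumes "\<beta> > 0"
  shows "(gumbel_cdf \<beta> has_real_derivative gumbel_pdf \<beta> x) (at x)"
  unfolding gumbel_cdf_def[abs_def] gumbel_pdf_eq using assms
  by (auto intro!: derivative_eq_intros simp: gumbel_cdf_def field_simps)

lemma gumbel_cdf_at_bot: "\<beta> > 0 \<Longrightarrow> (gumbel_cdf \<beta> \<longlongrightarrow> 0) at_bot"
  unfolding gumbel_cdf_def by real_asymp

lemma gumbel_cdf_at_top: "\<beta> > 0 \<Longrightarrow> (gumbel_cdf \<beta> \<longlongrightarrow> 1) at_top"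
  unfolding gumbel_cdf_def by real_asymp

lemma sets_gumbel[simp, measurable_cong]: "sets (gumbel \<beta>) = sets borel"
  by (simp add: gumbel_def)

lemma space_gumbel[simp]: "space (gumbel \<beta>) = UNIV"
  by (simp add: gumbel_def)

lemma emeasure_gumbel_atMost:
  assumes \<beta>: "\<beta> > 0"
  shows "emeasure (gumbel \<beta>) {..c} = ennreal (gumbel_cdf \<beta> c)"
proof -
  have "emeasure (gumbel \<beta>) {..c} = (\<integral>\<^sup>+x. ennreal (gumbel_pdf \<beta> x) * indicator {..c} x \<partial>lborel)"
    unfolding gumbel_def by (subst emeasure_density) auto
  also have "\<dots> = ennreal \<bar>-1\<bar> *
      (\<integral>\<^sup>+x. ennreal (gumbel_pdf \<beta> (0 + -1 * x)) * indicator {..c} (0 + -1 * x) \<partial>lborel)"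
    by (rule nn_integral_real_affine) auto
  also have "\<dots> = (\<integral>\<^sup>+x. ennreal (gumbel_pdf \<beta> (- x)) * indicator {-c..} x \<partial>lborel)"
    by (auto intro!: nn_integral_cong split: split_indicator)
  also have "\<dots> = ennreal (0 - (- gumbel_cdf \<beta> (- (-c))))"
  proof (rule nn_integral_FTC_atLeast)
    show "((\<lambda>y. - gumbel_cdf \<beta> (- y)) has_real_derivative gumbel_pdf \<beta> (- x)) (at x)" for x
      using DERIV_minus[OF DERIV_chain2[OF gumbel_cdf_has_real_derivative[OF \<beta>] DERIV_minus[OF DERIV_ident]]]
      by simp
    show "((\<lambda>y. - gumbel_cdf \<beta> (- y)) \<longlongrightarrow> 0) at_top"
      using tendsto_minus[OF filterlim_compose[OF gumbel_cdf_at_bot[OF \<beta>] filterlim_uminus_at_bot_at_top]]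
      by simp
  qed (use gumbel_pdf_nonneg \<beta> in auto)
  finally show ?thesis by simp
qed

lemma prob_space_gumbel:
  assumes \<beta>: "\<beta> > 0"
  shows "prob_space (gumbel \<beta>)"
proof
  have "(\<lambda>i. emeasure (gumbel \<beta>) {..real i}) \<longlonglongrightarrow> emeasure (gumbel \<beta>) (\<Union>i. {..real i})"
    by (rule Lim_emeasure_incseq) (auto simp: incseq_def)
  moreover have "(\<Union>i. {..real i}) = UNIV"
    by (auto intro: real_arch_simple)
  moreover have "(\<lambda>i. emeasure (gumbel \<beta>) {..real i}) \<longlonglongrightarrow> ennreal 1"
    unfolding emeasure_gumbel_atMost[OF \<beta>]
    by (intro tendsto_ennrealI filterlim_compose[OF gumbel_cdf_at_top[OF \<beta>] filterlim_real_sequentially])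
  ultimately show "emeasure (gumbel \<beta>) (space (gumbel \<beta>)) = 1"
    using LIMSEQ_unique by fastforce
qed

lemma emeasure_gumbel_singleton: "emeasure (gumbel \<beta>) {c} = 0"
proof -
  have "AE x in lborel. ennreal (gumbel_pdf \<beta> x) * indicator {c} x = 0"
    using AE_lborel_singleton[of c] by eventually_elim simp
  then show ?thesis
    unfolding gumbel_def by (subst emeasure_density) (auto simp: nn_integral_0_iff_AE)
qed

lemma emeasure_gumbel_lessThan:
  assumes \<beta>: "\<beta> > 0"
  shows "emeasure (gumbel \<beta>) {..<c} = ennreal (gumbel_cdf \<beta> c)"
proof -
  have "emeasure (gumbel \<beta>) {..c} = emeasure (gumbel \<beta>) ({..<c} \<union> {c})"
    by (intro arg_cong2[where f=emeasure]) auto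
  also have "\<dots> = emeasure (gumbel \<beta>) {..<c}"
    by (subst plus_emeasure[symmetric]) (auto simp: emeasure_gumbel_singleton)
  finally show ?thesis using emeasure_gumbel_atMost[OF \<beta>, of c] by simp
qed

text \<open>If \<open>U\<close> is standard exponential, then \<open>- \<beta> ln U - \<beta> \<gamma>\<close> is Gumbel distributed, so the mean
  of the noise is \<open>- \<beta> (E[ln U] + \<gamma>)\<close>. Integrating \<open>1 + h ln u \<le> u\<^sup>h\<close> gives
  \<open>E[ln U] \<le> (\<Gamma>(1 + h) - 1) / h\<close>, which tends to \<open>\<Gamma>'(1) = - \<gamma>\<close>; hence the mean is nonnegative.\<close>

definition std_exponential :: "real measure" where
  "std_exponential = density lborel (exponential_density 1)"

interpretation std_exponential: prob_space std_exponential
  unfolding std_exponential_def by (rule prob_space_exponential_density) simp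

lemma sets_std_exponential[simp, measurable_cong]: "sets std_exponential = sets borel"
  by (simp add: std_exponential_def)

lemma space_std_exponential[simp]: "space std_exponential = UNIV"
  by (simp add: std_exponential_def)

lemma measure_std_exponential_UNIV[simp]: "measure std_exponential UNIV = 1"
  using std_exponential.prob_space by simp

lemma AE_std_exponential_pos: "AE u in std_exponential. u > 0"
proof -
  have "AE u in lborel. 0 < exponential_density 1 u \<longrightarrow> u > 0"
    using AE_lborel_singleton[of 0] by eventually_elim (auto simp: exponential_density_def)
  then show ?thesis unfolding std_exponential_def by (subst AE_density) auto
qed

lemma emeasure_std_exponential_gumbel_le:
  assumes \<beta>: "\<beta> > 0"
  shows "emeasure std_exponential {u. - \<beta> * ln u - \<beta> * euler_mascheroni \<le> c} = ennreal (gumbel_cdf \<beta> c)"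
proof -
  define \<theta> where "\<theta> = exp (- ((c + \<beta> * euler_mascheroni) / \<beta>))"
  have \<theta>: "\<theta> > 0" by (simp add: \<theta>_def)
  have le_iff: "- \<beta> * ln u - \<beta> * euler_mascheroni \<le> c \<longleftrightarrow> \<theta> \<le> u" if "u > 0" for u
  proof -
    have "- \<beta> * ln u - \<beta> * euler_mascheroni \<le> c \<longleftrightarrow> - ((c + \<beta> * euler_mascheroni) / \<beta>) \<le> ln u"
      using \<beta> by (simp add: field_simps, linarith)
    also have "\<dots> \<longleftrightarrow> \<theta> \<le> u" using that by (simp add: ln_ge_iff \<theta>_def)
    finally show ?thesis .
  qed
  have "emeasure std_exponential {u. - \<beta> * ln u - \<beta> * euler_mascheroni \<le> c} =
      (\<integral>\<^sup>+u. ennreal (exponential_density 1 u) *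
         indicator {u. - \<beta> * ln u - \<beta> * euler_mascheroni \<le> c} u \<partial>lborel)"
    unfolding std_exponential_def by (subst emeasure_density) auto
  also have "\<dots> = (\<integral>\<^sup>+u. ennreal (exp (- u)) * indicator {\<theta>..} u \<partial>lborel)"
  proof (rule nn_integral_cong_AE)
    show "AE u in lborel. ennreal (exponential_density 1 u) *
        indicator {u. - \<beta> * ln u - \<beta> * euler_mascheroni \<le> c} u = ennreal (exp (- u)) * indicator {\<theta>..} u"
      using AE_lborel_singleton[of 0]
    proof eventually_elim
      case (elim u)
      then show ?case
        using \<theta> le_iff[of u] by (cases "u < 0") (auto simp: exponential_density_def indicator_def)
    qed
  qed
  also have "\<dots> = ennreal (0 - (- exp (- \<theta>)))"
  proof (rule nn_integral_FTC_atLeast)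
    show "((\<lambda>x::real. - exp (- x)) \<longlongrightarrow> 0) at_top" by real_asymp
  qed (auto intro!: derivative_eq_intros)
  finally show ?thesis by (simp add: gumbel_cdf_def \<theta>_def)
qed

lemma distr_std_exponential_gumbel:
  assumes \<beta>: "\<beta> > 0"
  shows "distr std_exponential borel (\<lambda>u. - \<beta> * ln u - \<beta> * euler_mascheroni) = gumbel \<beta>"
proof (rule cdf_unique)
  show "real_distribution (distr std_exponential borel (\<lambda>u. - \<beta> * ln u - \<beta> * euler_mascheroni))"
    unfolding real_distribution_def real_distribution_axioms_def
    by (auto intro!: std_exponential.prob_space_distr)
  show "real_distribution (gumbel \<beta>)"
    unfolding real_distribution_def real_distribution_axioms_def
    using prob_space_gumbel[OF \<beta>] by simp
  show "cdf (distr std_exponential borel (\<lambda>u. - \<beta> * ln u - \<beta> * euler_mascheroni)) = cdf (gumbel \<beta>)"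
  proof
    fix c
    have "cdf (distr std_exponential borel (\<lambda>u. - \<beta> * ln u - \<beta> * euler_mascheroni)) c =
        measure std_exponential {u. - \<beta> * ln u - \<beta> * euler_mascheroni \<le> c}"
      unfolding cdf_def2 by (subst measure_distr) (auto simp: vimage_def)
    also have "\<dots> = gumbel_cdf \<beta> c"
      using emeasure_std_exponential_gumbel_le[OF \<beta>] by (simp add: measure_def gumbel_cdf_nonneg)
    also have "\<dots> = cdf (gumbel \<beta>) c"
      unfolding cdf_def2 using emeasure_gumbel_atMost[OF \<beta>] by (simp add: measure_def gumbel_cdf_nonneg)
    finally show "cdf (distr std_exponential borel (\<lambda>u. - \<beta> * ln u - \<beta> * euler_mascheroni)) c =
        cdf (gumbel \<beta>) c" .
  qed
qed

lemma has_bochner_integral_std_exponential_powr: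
  assumes s: "s > 0"
  shows "has_bochner_integral std_exponential (\<lambda>u. u powr (s - 1)) (Gamma s)"
proof (rule has_bochner_integral_nn_integral)
  have "(\<integral>\<^sup>+u. ennreal (u powr (s - 1)) \<partial>std_exponential) =
      (\<integral>\<^sup>+u. ennreal (exponential_density 1 u) * ennreal (u powr (s - 1)) \<partial>lborel)"
    unfolding std_exponential_def by (subst nn_integral_density) auto
  also have "\<dots> = (\<integral>\<^sup>+t. ennreal (indicator {0..} t * t powr (s - 1) / exp t) \<partial>lborel)"
    by (intro nn_integral_cong)
       (auto simp: exponential_density_def indicator_def ennreal_mult'[symmetric] exp_minus field_simps)
  also have "\<dots> = ennreal (Gamma s)"
    using Gamma_conv_nn_integral_real[OF s] by simp
  finally show "(\<integral>\<^sup>+u. ennreal (u powr (s - 1)) \<partial>std_exponential) = ennreal (Gamma s)" .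
qed (use s in \<open>auto intro: less_imp_le\<close>)

lemma integrable_std_exponential_ln: "integrable std_exponential ln"
proof -
  have "integrable std_exponential (\<lambda>u. u powr (2 - 1) + 2 * u powr (1/2 - 1))"
    using has_bochner_integral_std_exponential_powr[of 2] has_bochner_integral_std_exponential_powr[of "1/2"]
    by (auto simp: has_bochner_integral_iff)
  then show ?thesis
  proof (rule Bochner_Integration.integrable_bound)
    show "AE u in std_exponential. norm (ln u) \<le> norm (u powr (2 - 1) + 2 * u powr (1 / 2 - 1))"
      using AE_std_exponential_pos
    proof eventually_elim
      case (elim u)
      have "ln (u powr (-(1/2))) \<le> u powr (-(1/2)) - 1"
        using elim by (intro ln_le_minus_one) simp
      then have "- ln u \<le> 2 * u powr (-(1/2))" using elim by (simp add: ln_powr)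
      moreover have "ln u \<le> u" using ln_le_minus_one[OF elim] by simp
      moreover have "0 \<le> u powr (-(1/2))" by simp
      ultimately have "\<bar>ln u\<bar> \<le> u + 2 * u powr (-(1/2))" and "0 \<le> u + 2 * u powr (-(1/2))"
        using elim by linarith+
      then show ?case using elim by simp
    qed
  qed simp
qed

lemma integral_std_exponential_ln_le: "integral\<^sup>L std_exponential ln \<le> - euler_mascheroni"
proof -
  define I where "I = integral\<^sup>L std_exponential ln"
  have bound: "I \<le> (Gamma (1 + h) - Gamma 1) / h" if h: "h > 0" for h :: real
  proof -
    have hb: "has_bochner_integral std_exponential (\<lambda>u. u powr (1 + h - 1)) (Gamma (1 + h))"
      using h by (intro has_bochner_integral_std_exponential_powr) simp
    have "1 + h * I = integral\<^sup>L std_exponential (\<lambda>u. 1 + h * ln u)"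
      using integrable_std_exponential_ln by (simp add: I_def std_exponential.prob_space)
    also have "\<dots> \<le> integral\<^sup>L std_exponential (\<lambda>u. u powr (1 + h - 1))"
    proof (rule integral_mono_AE)
      show "AE u in std_exponential. 1 + h * ln u \<le> u powr (1 + h - 1)"
        using AE_std_exponential_pos
        by eventually_elim (use exp_ge_add_one_self[of "h * ln _"] in \<open>simp add: powr_def mult.commute\<close>)
    qed (use integrable_std_exponential_ln hb in \<open>auto simp: has_bochner_integral_iff\<close>)
    also have "\<dots> = Gamma (1 + h)" using hb by (simp add: has_bochner_integral_iff)
    finally show ?thesis using h by (simp add: field_simps)
  qed
  have "(Gamma has_field_derivative Gamma 1 * Digamma 1) (at (1::real))"
    by (rule has_field_derivative_Gamma) (auto simp: nonpos_Ints_def)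
  then have "((\<lambda>h. (Gamma (1 + h) - Gamma 1) / h) \<longlongrightarrow> - euler_mascheroni) (at (0::real))"
    by (simp add: DERIV_def)
  then have "((\<lambda>h. (Gamma (1 + h) - Gamma 1) / h) \<longlongrightarrow> - euler_mascheroni) (at_right (0::real))"
    by (rule filterlim_mono) (auto simp: at_le)
  then have "I \<le> - euler_mascheroni"
    by (rule tendsto_lowerbound)
       (use eventually_at_right_less[of "0::real"] bound in \<open>auto elim: eventually_mono\<close>)
  then show ?thesis by (simp add: I_def)
qed

lemma integrable_gumbel_id: "\<beta> > 0 \<Longrightarrow> integrable (gumbel \<beta>) (\<lambda>x. x)"
  unfolding distr_std_exponential_gumbel[symmetric]
  using integrable_std_exponential_ln by (subst integrable_distr_eq) auto

lemma gumbel_mean_nonneg: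
  assumes \<beta>: "\<beta> > 0"
  shows "(\<integral>x. x \<partial>gumbel \<beta>) \<ge> 0"
proof -
  have "(\<integral>x. x \<partial>gumbel \<beta>) = (\<integral>u. - \<beta> * ln u - \<beta> * euler_mascheroni \<partial>std_exponential)"
    unfolding distr_std_exponential_gumbel[OF \<beta>, symmetric] by (subst integral_distr) auto
  also have "\<dots> = - \<beta> * (integral\<^sup>L std_exponential ln + euler_mascheroni)"
    using integrable_std_exponential_ln by (simp add: std_exponential.prob_space algebra_simps)
  finally show ?thesis
    using \<beta> integral_std_exponential_ln_le by (simp add: mult_le_0_iff)
qed

lemma integrable_gumbel_shift:
  assumes "\<beta> > 0"
  shows "integrable (gumbel \<beta>) (\<lambda>e. c + e)"
proof -
  interpret prob_space "gumbel \<beta>" using assms by (rule prob_space_gumbel)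
  show ?thesis using integrable_gumbel_id[OF assms] by simp
qed

lemma integral_gumbel_shift:
  assumes "\<beta> > 0"
  shows "(\<integral>e. c + e \<partial>gumbel \<beta>) = c + (\<integral>e. e \<partial>gumbel \<beta>)"
proof -
  interpret prob_space "gumbel \<beta>" using assms by (rule prob_space_gumbel)
  show ?thesis using integrable_gumbel_id[OF assms] prob_space by simp
qed

section \<open>Multinomial logit choice\<close>

definition exp_weight :: "real \<Rightarrow> (nat \<Rightarrow> real) \<Rightarrow> nat set \<Rightarrow> real" where
  "exp_weight \<beta> v A = (\<Sum>t\<in>A. exp (v t / \<beta>))"

definition logit_prob :: "real \<Rightarrow> (nat \<Rightarrow> real) \<Rightarrow> nat set \<Rightarrow> nat \<Rightarrow> real" where
  "logit_prob \<beta> v A i = (if i \<in> A then exp (v i / \<beta>) / exp_weight \<beta> v A else 0)"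

lemma exp_weight_pos: "finite A \<Longrightarrow> A \<noteq> {} \<Longrightarrow> 0 < exp_weight \<beta> v A"
  unfolding exp_weight_def by (intro sum_pos) auto

lemma sum_logit_prob:
  assumes "finite A" "A \<noteq> {}"
  shows "(\<Sum>k\<in>A. logit_prob \<beta> v A k) = 1"
  using exp_weight_pos[OF assms, of \<beta> v]
  by (simp add: logit_prob_def sum_divide_distrib[symmetric] exp_weight_def)

lemma chooses_unique:
  assumes "chooses A v \<omega> k" "chooses A v \<omega> k'"
  shows "k = k'"
proof (rule ccontr)
  assume "k \<noteq> k'"
  then have "v k' + \<omega> k' < v k + \<omega> k" "v k + \<omega> k < v k' + \<omega> k'"
    using assms unfolding chooses_def by auto
  then show False by simp
qed

lemma Max_eq_if_chooses:
  assumes "finite A" "chooses A v \<omega> k"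
  shows "Max ((\<lambda>t. v t + \<omega> t) ` A) = v k + \<omega> k"
proof (rule Max_eqI)
  fix y assume "y \<in> (\<lambda>t. v t + \<omega> t) ` A"
  then obtain t where "t \<in> A" "y = v t + \<omega> t" by blast
  then show "y \<le> v k + \<omega> k"
    using assms(2) unfolding chooses_def by (cases "t = k") (auto intro: less_imp_le)
qed (use assms in \<open>auto simp: chooses_def\<close>)

lemma prob_space_noise: "\<beta> > 0 \<Longrightarrow> prob_space (noise \<beta> J)"
  unfolding noise_def by (intro prob_space_PiM prob_space_gumbel)

lemma product_prob_space_gumbel: "\<beta> > 0 \<Longrightarrow> product_prob_space (\<lambda>_::nat. gumbel \<beta>)"
  by (simp add: product_prob_space_def product_prob_space_axioms_def product_sigma_finite_def
      prob_space_gumbel prob_space_imp_sigma_finite)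

lemma measurable_noise_component: "t \<in> J \<Longrightarrow> (\<lambda>\<omega>. \<omega> t) \<in> borel_measurable (noise \<beta> J)"
  using measurable_component_singleton[of t J "\<lambda>_. gumbel \<beta>"]
    measurable_cong_sets[OF refl sets_gumbel[of \<beta>]]
  unfolding noise_def by auto

lemma pred_noise_chooses:
  assumes "finite A" "A \<subseteq> J"
  shows "Measurable.pred (noise \<beta> J) (\<lambda>\<omega>. chooses A v \<omega> i)"
proof (cases "i \<in> A")
  case True
  have "Measurable.pred (noise \<beta> J) (\<lambda>\<omega>. v t + \<omega> t < v i + \<omega> i)" if "t \<in> A" for t
  proof -
    have "t \<in> J" "i \<in> J" using that True assms by auto
    note [measurable] = measurable_noise_component[OF this(1)] measurable_noise_component[OF this(2)]
    show ?thesis by measurable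
  qed
  then show ?thesis
    unfolding chooses_def using assms by (intro pred_intros_logic pred_intros_finite) auto
qed (simp add: chooses_def)

lemma integrable_noise_component:
  fixes g :: "real \<Rightarrow> real"
  assumes \<beta>: "\<beta> > 0" and "i \<in> J" and [measurable]: "g \<in> borel_measurable borel"
    and "integrable (gumbel \<beta>) g"
  shows "integrable (noise \<beta> J) (\<lambda>\<omega>. g (\<omega> i))"
proof -
  have "distr (PiM J (\<lambda>_. gumbel \<beta>)) (gumbel \<beta>) (\<lambda>\<omega>. \<omega> i) = gumbel \<beta>"
    using assms by (intro distr_PiM_component prob_space_gumbel) auto
  then have "integrable (distr (PiM J (\<lambda>_. gumbel \<beta>)) (gumbel \<beta>) (\<lambda>\<omega>. \<omega> i)) g"
    using assms(4) by simp
  from integrable_distr[OF measurable_component_singleton[OF \<open>i \<in> J\<close>, of "\<lambda>_. gumbel \<beta>"] this]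
  show ?thesis
    by (simp add: noise_def)
qed

lemma integrable_noise_chooses:
  fixes h :: "real \<Rightarrow> real"
  assumes \<beta>: "\<beta> > 0" and "finite J" "i \<in> A" "A \<subseteq> J"
    and [measurable]: "h \<in> borel_measurable borel"
    and "integrable (gumbel \<beta>) (\<lambda>e. h (v i + e))"
  shows "integrable (noise \<beta> J) (\<lambda>\<omega>. h (v i + \<omega> i) * (if chooses A v \<omega> i then 1 else 0))"
proof -
  have iJ: "i \<in> J" using assms by auto
  note [measurable] = measurable_noise_component[OF iJ, of \<beta>]
    pred_noise_chooses[OF finite_subset[OF \<open>A \<subseteq> J\<close> \<open>finite J\<close>] \<open>A \<subseteq> J\<close>]
  have "integrable (noise \<beta> J) (\<lambda>\<omega>. h (v i + \<omega> i))"
    using assms iJ by (intro integrable_noise_component) auto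
  then show ?thesis
  proof (rule Bochner_Integration.integrable_bound)
    show "(\<lambda>\<omega>. h (v i + \<omega> i) * (if chooses A v \<omega> i then 1 else 0)) \<in> borel_measurable (noise \<beta> J)"
      by measurable
  qed auto
qed

lemma measure_PiM_gumbel_below:
  assumes \<beta>: "\<beta> > 0" and "finite R" "B \<subseteq> R"
  shows "measure (PiM R (\<lambda>_. gumbel \<beta>)) {y \<in> space (PiM R (\<lambda>_. gumbel \<beta>)). \<forall>t\<in>B. y t < c t}
       = (\<Prod>t\<in>B. gumbel_cdf \<beta> (c t))"
proof -
  have "{y \<in> space (PiM R (\<lambda>_. gumbel \<beta>)). \<forall>t\<in>B. y t < c t} =
      prod_emb R (\<lambda>_. gumbel \<beta>) B (PiE B (\<lambda>t. {..<c t}))"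
    using assms by (auto simp: prod_emb_def space_PiM PiE_iff extensional_def)
  moreover have "emeasure (PiM R (\<lambda>_. gumbel \<beta>)) (prod_emb R (\<lambda>_. gumbel \<beta>) B (PiE B (\<lambda>t. {..<c t})))
      = (\<Prod>t\<in>B. ennreal (gumbel_cdf \<beta> (c t)))"
    using assms finite_subset[of B R]
    by (subst emeasure_PiM_emb) (auto intro: prob_space_gumbel simp: emeasure_gumbel_lessThan)
  ultimately show ?thesis
    by (simp add: measure_def prod_ennreal gumbel_cdf_nonneg prod_nonneg)
qed

lemma exp_gumbel_arg_shift:
  fixes e d \<beta> :: real
  shows "exp (- ((e - d + \<beta> * euler_mascheroni) / \<beta>)) = exp (- ((e + \<beta> * euler_mascheroni) / \<beta>)) * exp (d / \<beta>)"
proof -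
  have "- ((e - d + \<beta> * euler_mascheroni) / \<beta>) = - ((e + \<beta> * euler_mascheroni) / \<beta>) + d / \<beta>"
    by (simp add: add_divide_distrib diff_divide_distrib)
  then show ?thesis by (simp only: exp_add)
qed

text \<open>The identity behind the logit model: the density of \<open>\<epsilon>\<^sub>i\<close>, weighted by the probability that
  every other item of \<open>A\<close> scores lower than \<open>i\<close>, is a rescaled and shifted Gumbel density.\<close>

lemma gumbel_pdf_mult_prod_cdf:
  fixes v :: "nat \<Rightarrow> real"
  assumes \<beta>: "\<beta> > 0" and "finite A" "i \<in> A"
  defines "S \<equiv> exp_weight \<beta> v A"
  shows "gumbel_pdf \<beta> e * (\<Prod>t\<in>A-{i}. gumbel_cdf \<beta> (v i + e - v t))
       = exp (v i / \<beta>) / S * gumbel_pdf \<beta> (e - (\<beta> * ln S - v i))"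
proof -
  define q where "q = exp (- ((e + \<beta> * euler_mascheroni) / \<beta>))"
  define a where "a = exp (v i / \<beta>)"
  have a: "a > 0" by (simp add: a_def)
  have S_split: "S = a + (\<Sum>t\<in>A-{i}. exp (v t / \<beta>))"
    unfolding S_def a_def exp_weight_def using assms by (simp add: sum.remove)
  have S: "S > 0" unfolding S_split using a by (auto intro!: add_pos_nonneg sum_nonneg)
  note exp_shift = exp_gumbel_arg_shift[of e _ \<beta>, folded q_def]
  have "(\<Prod>t\<in>A-{i}. gumbel_cdf \<beta> (v i + e - v t)) = (\<Prod>t\<in>A-{i}. exp (- (q * (exp (v t / \<beta>) / a))))"
  proof (rule prod.cong[OF refl])
    fix t
    have "v i + e - v t = e - (v t - v i)" by simp
    then have "exp (- ((v i + e - v t + \<beta> * euler_mascheroni) / \<beta>)) = q * exp ((v t - v i) / \<beta>)"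
      by (simp only: exp_shift)
    also have "exp ((v t - v i) / \<beta>) = exp (v t / \<beta>) / a"
      by (simp add: a_def diff_divide_distrib exp_diff)
    finally show "gumbel_cdf \<beta> (v i + e - v t) = exp (- (q * (exp (v t / \<beta>) / a)))"
      by (simp add: gumbel_cdf_def)
  qed
  also have "\<dots> = exp (\<Sum>t\<in>A-{i}. - (q * (exp (v t / \<beta>) / a)))"
    using assms by (simp add: exp_sum)
  also have "(\<Sum>t\<in>A-{i}. - (q * (exp (v t / \<beta>) / a))) = - (q * ((S - a) / a))"
    unfolding S_split by (simp add: sum_negf sum_distrib_left sum_divide_distrib[symmetric])
  finally have prod_eq: "(\<Prod>t\<in>A-{i}. gumbel_cdf \<beta> (v i + e - v t)) = exp (- (q * ((S - a) / a)))" .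
  have "exp ((\<beta> * ln S - v i) / \<beta>) = S / a"
    using \<beta> S by (simp add: a_def diff_divide_distrib exp_diff)
  then have "exp (- ((e - (\<beta> * ln S - v i) + \<beta> * euler_mascheroni) / \<beta>)) = q * (S / a)"
    by (simp only: exp_shift)
  then have shifted: "gumbel_pdf \<beta> (e - (\<beta> * ln S - v i)) = q * (S / a) * exp (- (q * (S / a))) / \<beta>"
    unfolding gumbel_pdf_eq by (simp add: gumbel_cdf_def)
  have "gumbel_pdf \<beta> e = q * exp (- q) / \<beta>"
    unfolding gumbel_pdf_eq by (simp add: gumbel_cdf_def q_def)
  then have "gumbel_pdf \<beta> e * (\<Prod>t\<in>A-{i}. gumbel_cdf \<beta> (v i + e - v t))
      = q / \<beta> * (exp (- q) * exp (- (q * ((S - a) / a))))"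
    unfolding prod_eq by simp
  also have "exp (- q) * exp (- (q * ((S - a) / a))) = exp (- (q * (S / a)))"
    using a by (simp add: exp_add[symmetric] field_simps)
  also have "q / \<beta> * exp (- (q * (S / a))) = a / S * gumbel_pdf \<beta> (e - (\<beta> * ln S - v i))"
    unfolding shifted using a S by (simp add: field_simps)
  finally show ?thesis by (simp add: a_def)
qed

lemma integral_noise_chooses_eq_prod_cdf:
  fixes h :: "real \<Rightarrow> real"
  assumes \<beta>: "\<beta> > 0" and "finite J" "i \<in> A" "A \<subseteq> J"
    and [measurable]: "h \<in> borel_measurable borel"
    and "integrable (gumbel \<beta>) (\<lambda>e. h (v i + e))"
  shows "(\<integral>\<omega>. h (v i + \<omega> i) * (if chooses A v \<omega> i then 1 else 0) \<partial>noise \<beta> J)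
       = (\<integral>e. h (v i + e) * (\<Prod>t\<in>A-{i}. gumbel_cdf \<beta> (v i + e - v t)) \<partial>gumbel \<beta>)"
proof -
  interpret P: product_prob_space "\<lambda>_::nat. gumbel \<beta>" UNIV using product_prob_space_gumbel[OF \<beta>] .
  define R where "R = J - {i}"
  define f where "f \<omega> = h (v i + \<omega> i) * (if chooses A v \<omega> i then 1 else 0)" for \<omega> :: "nat \<Rightarrow> real"
  have J: "J = {i} \<union> R" and "finite R" and AR: "A - {i} \<subseteq> R"
    using assms by (auto simp: R_def)
  have "integral\<^sup>L (noise \<beta> J) f =
      (\<integral>x. (\<integral>y. f (merge {i} R (x, y)) \<partial>PiM R (\<lambda>_. gumbel \<beta>)) \<partial>PiM {i} (\<lambda>_. gumbel \<beta>))"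
    using integrable_noise_chooses[where h=h and v=v, OF assms] \<open>finite R\<close> unfolding noise_def J f_def
    by (intro P.product_integral_fold) (auto simp: R_def)
  also have "\<dots> = (\<integral>x. h (v i + x i) * (\<Prod>t\<in>A-{i}. gumbel_cdf \<beta> (v i + x i - v t)) \<partial>PiM {i} (\<lambda>_. gumbel \<beta>))"
  proof (rule Bochner_Integration.integral_cong[OF refl])
    fix x
    define B where "B = {y \<in> space (PiM R (\<lambda>_. gumbel \<beta>)). \<forall>t\<in>A-{i}. y t < v i + x i - v t}"
    have "(\<integral>y. f (merge {i} R (x, y)) \<partial>PiM R (\<lambda>_. gumbel \<beta>)) =
        (\<integral>y. h (v i + x i) * indicator B y \<partial>PiM R (\<lambda>_. gumbel \<beta>))"
    proof (rule Bochner_Integration.integral_cong[OF refl])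
      fix y assume y: "y \<in> space (PiM R (\<lambda>_. gumbel \<beta>))"
      have "merge {i} R (x, y) i = x i" and "merge {i} R (x, y) t = y t" if "t \<in> A - {i}" for t
        using that AR by (auto simp: merge_def)
      then have "chooses A v (merge {i} R (x, y)) i \<longleftrightarrow> y \<in> B"
        using y \<open>i \<in> A\<close> by (auto simp: chooses_def B_def algebra_simps)
      then show "f (merge {i} R (x, y)) = h (v i + x i) * indicator B y"
        by (simp add: f_def merge_def indicator_def)
    qed
    also have "\<dots> = h (v i + x i) * measure (PiM R (\<lambda>_. gumbel \<beta>)) B"
      by (simp add: B_def Int_absorb2 Collect_subset)
    also have "measure (PiM R (\<lambda>_. gumbel \<beta>)) B = (\<Prod>t\<in>A-{i}. gumbel_cdf \<beta> (v i + x i - v t))"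
      unfolding B_def using \<beta> \<open>finite R\<close> AR by (rule measure_PiM_gumbel_below)
    finally show "(\<integral>y. f (merge {i} R (x, y)) \<partial>PiM R (\<lambda>_. gumbel \<beta>)) =
        h (v i + x i) * (\<Prod>t\<in>A-{i}. gumbel_cdf \<beta> (v i + x i - v t))" .
  qed
  also have "\<dots> = (\<integral>e. h (v i + e) * (\<Prod>t\<in>A-{i}. gumbel_cdf \<beta> (v i + e - v t)) \<partial>gumbel \<beta>)"
    by (rule P.product_integral_singleton) measurable
  finally show ?thesis unfolding f_def .
qed

lemma integral_noise_chooses:
  fixes v :: "nat \<Rightarrow> real" and h :: "real \<Rightarrow> real"
  assumes \<beta>: "\<beta> > 0" and "finite J" "i \<in> A" "A \<subseteq> J"
    and [measurable]: "h \<in> borel_measurable borel"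
    and "integrable (gumbel \<beta>) (\<lambda>e. h (v i + e))"
  defines "S \<equiv> exp_weight \<beta> v A"
  shows "(\<integral>\<omega>. h (v i + \<omega> i) * (if chooses A v \<omega> i then 1 else 0) \<partial>noise \<beta> J)
       = logit_prob \<beta> v A i * (\<integral>e. h (\<beta> * ln S + e) \<partial>gumbel \<beta>)"
proof -
  define s where "s = \<beta> * ln S - v i"
  have finA: "finite A" using assms finite_subset by auto
  have "(\<integral>\<omega>. h (v i + \<omega> i) * (if chooses A v \<omega> i then 1 else 0) \<partial>noise \<beta> J)
      = (\<integral>e. gumbel_pdf \<beta> e * (h (v i + e) * (\<Prod>t\<in>A-{i}. gumbel_cdf \<beta> (v i + e - v t))) \<partial>lborel)"
    unfolding integral_noise_chooses_eq_prod_cdf[where h=h and v=v, OF assms(1-6)] gumbel_def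
    using \<beta> by (subst integral_density) (auto simp: gumbel_pdf_nonneg)
  also have "\<dots> = (\<integral>e. logit_prob \<beta> v A i * (gumbel_pdf \<beta> (e - s) * h (v i + e)) \<partial>lborel)"
  proof (rule Bochner_Integration.integral_cong[OF refl])
    fix e
    have "gumbel_pdf \<beta> e * (\<Prod>t\<in>A-{i}. gumbel_cdf \<beta> (v i + e - v t)) = logit_prob \<beta> v A i * gumbel_pdf \<beta> (e - s)"
      using gumbel_pdf_mult_prod_cdf[where v=v and e=e, OF \<beta> finA \<open>i \<in> A\<close>] \<open>i \<in> A\<close>
      unfolding logit_prob_def S_def s_def by simp
    then show "gumbel_pdf \<beta> e * (h (v i + e) * (\<Prod>t\<in>A-{i}. gumbel_cdf \<beta> (v i + e - v t))) =
        logit_prob \<beta> v A i * (gumbel_pdf \<beta> (e - s) * h (v i + e))"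
      by (metis mult.commute mult.left_commute)
  qed
  also have "\<dots> = logit_prob \<beta> v A i * (\<integral>e. gumbel_pdf \<beta> (e - s) * h (v i + e) \<partial>lborel)"
    by simp
  also have "(\<integral>e. gumbel_pdf \<beta> (e - s) * h (v i + e) \<partial>lborel) =
      \<bar>1\<bar> *\<^sub>R (\<integral>x. gumbel_pdf \<beta> ((s + 1 * x) - s) * h (v i + (s + 1 * x)) \<partial>lborel)"
    by (rule lborel_integral_real_affine) simp
  also have "\<dots> = (\<integral>x. gumbel_pdf \<beta> x * h (\<beta> * ln S + x) \<partial>lborel)"
    by (simp add: s_def algebra_simps)
  also have "\<dots> = (\<integral>x. h (\<beta> * ln S + x) \<partial>gumbel \<beta>)"
    unfolding gumbel_def using \<beta> by (subst integral_density) (auto simp: gumbel_pdf_nonneg)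
  finally show ?thesis .
qed

lemma measure_noise_chooses:
  assumes \<beta>: "\<beta> > 0" and "finite J" "k \<in> A" "A \<subseteq> J"
  shows "measure (noise \<beta> J) {\<omega> \<in> space (noise \<beta> J). chooses A v \<omega> k} = logit_prob \<beta> v A k"
proof -
  interpret G: prob_space "gumbel \<beta>" using \<beta> by (rule prob_space_gumbel)
  have "(\<integral>\<omega>. (\<lambda>_. 1::real) (v k + \<omega> k) * (if chooses A v \<omega> k then 1 else 0) \<partial>noise \<beta> J)
      = logit_prob \<beta> v A k * (\<integral>e. (\<lambda>_. 1::real) (\<beta> * ln (exp_weight \<beta> v A) + e) \<partial>gumbel \<beta>)"
    using assms by (intro integral_noise_chooses) auto
  moreover have "(\<integral>\<omega>. (\<lambda>_. 1::real) (v k + \<omega> k) * (if chooses A v \<omega> k then 1 else 0) \<partial>noise \<beta> J) =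
      (\<integral>\<omega>. indicator {\<omega> \<in> space (noise \<beta> J). chooses A v \<omega> k} \<omega> \<partial>noise \<beta> J)"
    by (rule Bochner_Integration.integral_cong) (auto simp: indicator_def)
  ultimately show ?thesis
    using G.prob_space by (simp add: Int_absorb2 Collect_subset)
qed

lemma AE_noise_ex_chooses:
  assumes \<beta>: "\<beta> > 0" and "finite J" "A \<subseteq> J" "A \<noteq> {}"
  shows "AE \<omega> in noise \<beta> J. \<exists>k\<in>A. chooses A v \<omega> k"
proof -
  interpret N: prob_space "noise \<beta> J" using \<beta> by (rule prob_space_noise)
  define C where "C k = {\<omega> \<in> space (noise \<beta> J). chooses A v \<omega> k}" for k
  have finA: "finite A" using assms finite_subset by auto
  have "C k \<in> sets (noise \<beta> J)" for k
    unfolding C_def using pred_noise_chooses[OF finA \<open>A \<subseteq> J\<close>] by measurable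
  moreover have "disjoint_family_on C A"
    by (auto simp: disjoint_family_on_def C_def dest: chooses_unique)
  ultimately have "measure (noise \<beta> J) (\<Union>k\<in>A. C k) = (\<Sum>k\<in>A. measure (noise \<beta> J) (C k))"
    using finA by (intro N.finite_measure_finite_Union) auto
  also have "\<dots> = 1"
    using measure_noise_chooses[OF \<beta> \<open>finite J\<close> _ \<open>A \<subseteq> J\<close>] sum_logit_prob[OF finA \<open>A \<noteq> {}\<close>]
    by (simp add: C_def)
  finally have "AE \<omega> in noise \<beta> J. \<omega> \<in> (\<Union>k\<in>A. C k)" by (rule N.AE_prob_1)
  then show ?thesis by eventually_elim (auto simp: C_def)
qed

lemma integral_noise_chosen_value:
  assumes \<beta>: "\<beta> > 0" and "finite J" "A \<subseteq> J"
  shows "(\<integral>\<omega>. (v i + \<omega> i) * (if chooses A v \<omega> i then 1 else 0) \<partial>noise \<beta> J) =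
     logit_prob \<beta> v A i * (\<beta> * ln (exp_weight \<beta> v A) + (\<integral>e. e \<partial>gumbel \<beta>))"
proof (cases "i \<in> A")
  case True
  have "(\<integral>\<omega>. (\<lambda>x. x) (v i + \<omega> i) * (if chooses A v \<omega> i then 1 else 0) \<partial>noise \<beta> J)
      = logit_prob \<beta> v A i * (\<integral>e. (\<lambda>x. x) (\<beta> * ln (exp_weight \<beta> v A) + e) \<partial>gumbel \<beta>)"
    using assms True by (intro integral_noise_chooses) (auto intro: integrable_gumbel_shift)
  then show ?thesis using integral_gumbel_shift[OF \<beta>] by simp
qed (simp add: chooses_def logit_prob_def)

lemma integral_noise_Max:
  assumes \<beta>: "\<beta> > 0" and "finite J" "A \<subseteq> J" "A \<noteq> {}"
  shows "(\<integral>\<omega>. Max ((\<lambda>t. v t + \<omega> t) ` A) \<partial>noise \<beta> J) = \<beta> * ln (exp_weight \<beta> v A) + (\<integral>e. e \<partial>gumbel \<beta>)"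
proof -
  have finA: "finite A" using assms finite_subset by auto
  have integrable: "integrable (noise \<beta> J) (\<lambda>\<omega>. (v k + \<omega> k) * (if chooses A v \<omega> k then 1 else 0))"
    if "k \<in> A" for k
    using assms that by (intro integrable_noise_chooses) (auto intro: integrable_gumbel_shift)
  have "AE \<omega> in noise \<beta> J. Max ((\<lambda>t. v t + \<omega> t) ` A) =
      (\<Sum>k\<in>A. (v k + \<omega> k) * (if chooses A v \<omega> k then 1 else 0))"
    using AE_noise_ex_chooses[OF assms, where v=v]
  proof eventually_elim
    case (elim \<omega>)
    then obtain k where k: "k \<in> A" "chooses A v \<omega> k" by blast
    then have "(\<Sum>l\<in>A. (v l + \<omega> l) * (if chooses A v \<omega> l then 1 else 0)) =
        (\<Sum>l\<in>A. if l = k then v l + \<omega> l else 0)"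
      by (intro sum.cong) (auto dest: chooses_unique)
    then show ?case using finA k by (simp add: Max_eq_if_chooses)
  qed
  moreover have "(\<lambda>\<omega>. Max ((\<lambda>t. v t + \<omega> t) ` A)) \<in> borel_measurable (noise \<beta> J)"
  proof (rule borel_measurable_Max[OF finA])
    fix t assume "t \<in> A"
    then have [measurable]: "(\<lambda>\<omega>. \<omega> t) \<in> borel_measurable (noise \<beta> J)"
      using assms by (intro measurable_noise_component) auto
    show "(\<lambda>\<omega>. v t + \<omega> t) \<in> borel_measurable (noise \<beta> J)" by measurable
  qed
  ultimately have "(\<integral>\<omega>. Max ((\<lambda>t. v t + \<omega> t) ` A) \<partial>noise \<beta> J) =
      (\<integral>\<omega>. (\<Sum>k\<in>A. (v k + \<omega> k) * (if chooses A v \<omega> k then 1 else 0)) \<partial>noise \<beta> J)"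
    using integrable by (intro integral_cong_AE) (auto intro: borel_measurable_integrable)
  also have "\<dots> = (\<Sum>k\<in>A. logit_prob \<beta> v A k * (\<beta> * ln (exp_weight \<beta> v A) + (\<integral>e. e \<partial>gumbel \<beta>)))"
    using integrable assms by (simp add: Bochner_Integration.integral_sum integral_noise_chosen_value)
  also have "\<dots> = \<beta> * ln (exp_weight \<beta> v A) + (\<integral>e. e \<partial>gumbel \<beta>)"
    by (simp add: sum_distrib_right[symmetric] sum_logit_prob[OF finA \<open>A \<noteq> {}\<close>])
  finally show ?thesis .
qed

section \<open>The constant \<open>c(\<beta>, K)\<close>\<close>

lemma sq_le_exp:
  fixes t :: real
  assumes "t \<ge> 0"
  shows "t\<^sup>2 \<le> exp t"
proof -
  have "1 + t/2 + (t/2)\<^sup>2 / 2 \<le> exp (t/2)"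
    using assms by (intro exp_lower_Taylor_quadratic) simp
  moreover have "0 \<le> ((t/2 - 1)\<^sup>2 + 1) / 2" by simp
  then have "t \<le> 1 + t/2 + (t/2)\<^sup>2 / 2" by (simp add: power2_eq_square field_simps)
  ultimately have "t * t \<le> exp (t/2) * exp (t/2)"
    using assms by (intro mult_mono) auto
  then show ?thesis by (simp add: power2_eq_square flip: exp_add)
qed

lemma ln_one_plus_ge_pade:
  fixes k :: real
  assumes "k \<ge> 0"
  shows "2 * k / (2 + k) \<le> ln (1 + k)"
proof -
  let ?f = "\<lambda>k::real. ln (1 + k) - 2 * k / (2 + k)"
  have "?f 0 \<le> ?f k"
  proof (rule DERIV_nonneg_imp_nondecreasing[OF assms])
    fix x :: real assume x: "0 \<le> x" "x \<le> k"
    have "DERIV ?f x :> 1 / (1 + x) - 4 / (2 + x)\<^sup>2"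
      using x by (auto intro!: derivative_eq_intros simp: field_simps power2_eq_square)
    moreover have "4 * (1 + x) \<le> (2 + x)\<^sup>2" by (simp add: power2_eq_square algebra_simps)
    then have "4 / (2 + x)\<^sup>2 \<le> 1 / (1 + x)" using x by (simp add: field_simps)
    ultimately show "\<exists>y. DERIV ?f x :> y \<and> y \<ge> 0" by auto
  qed
  then show ?thesis by simp
qed

text \<open>This is the sign of the \<open>a\<close>-derivative of \<open>c_ratio a r\<close> below, written in the variable
  \<open>t = ln ((a + r - 1) / r)\<close>.\<close>

lemma mult_ln_exp_ineq:
  fixes r t :: real
  assumes r: "r \<ge> 1" and t: "t \<ge> 0"
  shows "(r - 1) * (ln r + t) * t \<le> (r * exp t - r + 1) * ln r"
proof -
  define k where "k = r - 1"
  define z where "z = ln r"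
  have k: "k \<ge> 0" and z: "z \<ge> 0" using r by (simp_all add: k_def z_def)
  have pade: "2 * k / (2 + k) \<le> z"
    unfolding z_def using ln_one_plus_ge_pade[OF k] by (simp add: k_def)
  have "k * t\<^sup>2 * (1 - z / 2) \<le> z * exp t"
  proof (cases "z \<ge> 2")
    case True
    then have "k * t\<^sup>2 * (1 - z / 2) \<le> 0" using k by (intro mult_nonneg_nonpos) auto
    also have "0 \<le> z * exp t" using z by simp
    finally show ?thesis .
  next
    case False
    have "k * t\<^sup>2 * (1 - z / 2) \<le> k * (1 - z / 2) * exp t"
      using False k sq_le_exp[OF t] by (simp add: mult_left_mono mult.commute mult.left_commute)
    also have "k * (1 - z / 2) \<le> z"
      using pade k by (simp add: field_simps)
    then have "k * (1 - z / 2) * exp t \<le> z * exp t" by simp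
    finally show ?thesis .
  qed
  moreover have "k * z * (t\<^sup>2 / 2) \<le> k * z * (exp t - 1 - t)"
    using exp_lower_Taylor_quadratic[OF t] k z by (intro mult_left_mono) auto
  ultimately have "k * (z + t) * t \<le> ((1 + k) * exp t - k) * z"
    by (simp add: algebra_simps power2_eq_square)
  then show ?thesis unfolding k_def z_def by (simp add: algebra_simps)
qed

definition c_ratio :: "real \<Rightarrow> real \<Rightarrow> real" where
  "c_ratio a r = a * ln (a + r - 1) / ((a + r - 1) * (ln (a + r - 1) - ln r))"

lemma c_const_eq_c_ratio: "c_const \<beta> K = c_ratio (exp (1 / \<beta>)) (real K)"
  by (simp add: c_const_def c_ratio_def Let_def algebra_simps)

lemma c_ratio_mono_right:
  assumes a: "a > 1" and r: "1 \<le> r1" "r1 \<le> r2"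
  shows "c_ratio a r1 \<le> c_ratio a r2"
  unfolding c_ratio_def
proof (rule DERIV_nonneg_imp_nondecreasing[OF r(2)])
  fix x assume x: "r1 \<le> x" "x \<le> r2"
  define T where "T = a + x - 1"
  define N where "N = a * (1 / T) * (T * (ln T - ln x)) - (1 * (ln T - ln x) + T * (1 / T - 1 / x)) * (a * ln T)"
  have x1: "x \<ge> 1" and "T > x" using x r a by (simp_all add: T_def)
  then have T1: "T > 1" and pos: "ln T - ln x > 0" by simp_all
  have dN: "DERIV (\<lambda>y. a * ln (a + y - 1)) x :> a * (1 / T)"
    using T1 by (auto intro!: derivative_eq_intros simp: T_def)
  have dD: "DERIV (\<lambda>y. (a + y - 1) * (ln (a + y - 1) - ln y)) x :> 1 * (ln T - ln x) + T * (1 / T - 1 / x)"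
    using T1 x1 by (auto intro!: derivative_eq_intros simp: T_def)
  have "(a + x - 1) * (ln (a + x - 1) - ln x) \<noteq> 0"
    using pos T1 by (simp add: T_def)
  from DERIV_quotient[OF dN dD this] have "DERIV (\<lambda>y. a * ln (a + y - 1) / ((a + y - 1) * (ln (a + y - 1) - ln y))) x :>
      N / (T * (ln T - ln x)) ^ Suc (Suc 0)"
    by (simp add: N_def T_def)
  moreover have "N \<ge> 0"
  proof -
    have "ln T - ln x = ln (T / x)" using T1 x1 by (simp add: ln_div)
    also have "\<dots> \<le> T / x - 1" using T1 x1 by (intro ln_le_minus_one) simp
    finally have "ln T - ln x \<le> T / x - 1" .
    moreover have "T * (1 / T - 1 / x) = 1 - T / x" using T1 x1 by (simp add: field_simps)
    ultimately have "1 * (ln T - ln x) + T * (1 / T - 1 / x) \<le> 0" by simp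
    then have "(1 * (ln T - ln x) + T * (1 / T - 1 / x)) * (a * ln T) \<le> 0"
      using a T1 by (intro mult_nonpos_nonneg) auto
    moreover have "0 \<le> a * (1 / T) * (T * (ln T - ln x))" using a T1 pos by simp
    ultimately show ?thesis by (simp add: N_def)
  qed
  ultimately show "\<exists>y. DERIV (\<lambda>y. a * ln (a + y - 1) / ((a + y - 1) * (ln (a + y - 1) - ln y))) x :> y \<and> 0 \<le> y"
    by (intro exI[of _ "N / (T * (ln T - ln x)) ^ Suc (Suc 0)"] conjI) (simp_all add: zero_le_divide_iff)
qed

lemma c_ratio_antimono_left:
  assumes r: "r \<ge> 1" and a: "1 < a1" "a1 \<le> a2"
  shows "c_ratio a2 r \<le> c_ratio a1 r"
  unfolding c_ratio_def
proof (rule DERIV_nonpos_imp_nonincreasing[OF a(2)])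
  fix y assume y: "a1 \<le> y" "y \<le> a2"
  define T where "T = y + r - 1"
  define N where "N = (1 * ln T + y * (1 / T)) * (T * (ln T - ln r)) - (1 * (ln T - ln r) + T * (1 / T)) * (y * ln T)"
  have "y > 1" and "T > r" using y a by (simp_all add: T_def)
  then have T1: "T > 1" and pos: "ln T - ln r > 0" using r by simp_all
  have dN: "DERIV (\<lambda>y. y * ln (y + r - 1)) y :> 1 * ln T + y * (1 / T)"
    using T1 by (auto intro!: derivative_eq_intros simp: T_def)
  have dD: "DERIV (\<lambda>y. (y + r - 1) * (ln (y + r - 1) - ln r)) y :> 1 * (ln T - ln r) + T * (1 / T)"
    using T1 by (auto intro!: derivative_eq_intros simp: T_def)
  have "(y + r - 1) * (ln (y + r - 1) - ln r) \<noteq> 0"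
    using pos T1 by (simp add: T_def)
  from DERIV_quotient[OF dN dD this] have "DERIV (\<lambda>y. y * ln (y + r - 1) / ((y + r - 1) * (ln (y + r - 1) - ln r))) y :>
      N / (T * (ln T - ln r)) ^ Suc (Suc 0)"
    by (simp add: N_def T_def)
  moreover have "N \<le> 0"
  proof -
    define t where "t = ln T - ln r"
    have "t \<ge> 0" using pos by (simp add: t_def)
    moreover have "y = r * exp t - r + 1" using T1 r by (simp add: t_def exp_diff T_def)
    moreover have "N = (r - 1) * (ln r + t) * t - y * ln r"
      using T1 by (simp add: N_def t_def T_def field_simps)
    ultimately show ?thesis using mult_ln_exp_ineq[OF r] by simp
  qed
  ultimately show "\<exists>z. DERIV (\<lambda>y. y * ln (y + r - 1) / ((y + r - 1) * (ln (y + r - 1) - ln r))) y :> z \<and> z \<le> 0"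
    by (intro exI[of _ "N / (T * (ln T - ln r)) ^ Suc (Suc 0)"] conjI) (simp_all add: divide_le_0_iff)
qed

lemma c_const_pos:
  assumes "\<beta> > 0" "K \<ge> 1"
  shows "c_const \<beta> K > 0"
proof -
  define B where "B = exp (1 / \<beta>)"
  have "B > 1" "real K \<ge> 1" using assms by (simp_all add: B_def)
  moreover from this have "ln (B + real K - 1) > ln (real K)" "ln (real K) \<ge> 0" by simp_all
  ultimately have "0 < B * ln (B + real K - 1) / ((B + real K - 1) * (ln (B + real K - 1) - ln (real K)))"
    by (intro divide_pos_pos mult_pos_pos) auto
  then show ?thesis by (simp add: c_const_eq_c_ratio c_ratio_def B_def)
qed

lemma c_const_mult_ln_le:
  assumes \<beta>: "\<beta> > 0" and K: "K \<ge> 1" and "1 \<le> a" "a \<le> exp (1 / \<beta>)" and "S - a \<ge> real K - 1"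
  shows "c_const \<beta> K * (ln S - ln (S - a + 1)) \<le> a / S * ln S"
proof (cases "a = 1")
  case False
  define r where "r = S - a + 1"
  have "a > 1" "r \<ge> real K" "real K \<ge> 1" using assms False by (simp_all add: r_def)
  then have S_eq: "S = a + r - 1" and "S > 1" and pos: "ln S - ln r > 0" by (simp_all add: r_def)
  have "c_const \<beta> K \<le> c_ratio a (real K)"
    unfolding c_const_eq_c_ratio using c_ratio_antimono_left[OF \<open>real K \<ge> 1\<close> \<open>a > 1\<close>] assms by simp
  also have "\<dots> \<le> c_ratio a r" using c_ratio_mono_right[OF \<open>a > 1\<close> \<open>real K \<ge> 1\<close> \<open>r \<ge> real K\<close>] .
  also have "\<dots> = a * ln S / (S * (ln S - ln r))" by (simp add: c_ratio_def S_eq)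
  finally have "c_const \<beta> K * (ln S - ln r) \<le> a * ln S / (S * (ln S - ln r)) * (ln S - ln r)"
    using pos by (intro mult_right_mono) auto
  also have "\<dots> = a / S * ln S" using pos \<open>S > 1\<close> by (simp add: field_simps)
  finally show ?thesis by (simp add: r_def)
qed (use assms in auto)

lemma ln_weight_drop_le:
  assumes \<beta>: "\<beta> > 0" and K: "K \<ge> 1" and a: "1 \<le> a" "a \<le> exp (1 / \<beta>)"
    and S: "S - a \<ge> real K - 1" and W: "S - a + 1 \<le> W" and "\<mu> \<ge> 0"
  shows "\<beta> * ln S - \<beta> * ln W \<le> a / S * (\<beta> * ln S + \<mu>) / c_const \<beta> K"
proof -
  have c: "c_const \<beta> K > 0" using c_const_pos[OF \<beta> K] .
  have "S - a + 1 > 0" "S \<ge> 1" using S K a by simp_all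
  then have "\<beta> * ln S - \<beta> * ln W \<le> \<beta> * (ln S - ln (S - a + 1))"
    using \<beta> W by (simp add: algebra_simps)
  also have "ln S - ln (S - a + 1) \<le> a / S * ln S / c_const \<beta> K"
    using c_const_mult_ln_le[OF \<beta> K a S] c by (subst pos_le_divide_eq) (auto simp: mult.commute)
  then have "\<beta> * (ln S - ln (S - a + 1)) \<le> \<beta> * (a / S * ln S / c_const \<beta> K)"
    using \<beta> by (intro mult_left_mono) auto
  also have "\<dots> \<le> a / S * (\<beta> * ln S + \<mu>) / c_const \<beta> K"
    using c \<open>S \<ge> 1\<close> a \<open>\<mu> \<ge> 0\<close> by (simp add: divide_right_mono mult_left_mono)
  finally show ?thesis .
qed

section \<open>Top-\<open>K\<close> slates\<close>

lemma ex_top_subset: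
  fixes v :: "nat \<Rightarrow> real"
  assumes "finite I" "K \<le> card I"
  shows "\<exists>A. A \<subseteq> I \<and> card A = K \<and> (\<forall>a\<in>A. \<forall>b\<in>I - A. v b \<le> v a)"
  using assms(2)
proof (induction K)
  case 0
  show ?case by (intro exI[of _ "{}"]) auto
next
  case (Suc K)
  then obtain A where A: "A \<subseteq> I" "card A = K" "\<forall>a\<in>A. \<forall>b\<in>I - A. v b \<le> v a" by auto
  have "finite (I - A)" using assms by simp
  moreover have "I - A \<noteq> {}"
    using A Suc.prems card_mono[OF finite_subset[OF A(1) assms(1)], of I] by auto
  ultimately have "Max (v ` (I - A)) \<in> v ` (I - A)" by simp
  then obtain c where "c \<in> I - A" "v c = Max (v ` (I - A))" by auto
  with \<open>finite (I - A)\<close> have c: "c \<in> I - A" "\<forall>b\<in>I - A. v b \<le> v c" by auto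
  show ?case
    using A c finite_subset[OF A(1) assms(1)] by (intro exI[of _ "insert c A"]) auto
qed

lemma finite_top_slates: "finite I \<Longrightarrow> finite (top_slates K I v d)"
  unfolding top_slates_def by (auto intro: finite_subset[of _ "Pow I"])

lemma top_slates_nonempty: "finite I \<Longrightarrow> top_slates K I v d \<noteq> {}"
  using ex_top_subset[of I K v] by (auto simp: top_slates_def)

lemma top_slates_subset: "K \<ge> 1 \<Longrightarrow> A \<in> top_slates K I v d \<Longrightarrow> A \<subseteq> insert d I \<and> A \<noteq> {}"
  by (auto simp: top_slates_def split: if_splits)

lemma exp_weight_le_top:
  assumes \<beta>: "\<beta> > 0" and "finite I" and AI: "A \<subseteq> I" and top: "\<forall>a\<in>A. \<forall>b\<in>I - A. v b \<le> v a"
    and BI: "B \<subseteq> I" and "card B = card A"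
  shows "exp_weight \<beta> v B \<le> exp_weight \<beta> v A"
proof -
  let ?w = "\<lambda>t. exp (v t / \<beta>)"
  have finA: "finite A" and finB: "finite B"
    using finite_subset[OF AI] finite_subset[OF BI] \<open>finite I\<close> by auto
  have "card (B - A) = card (A - B)"
    using \<open>card B = card A\<close> card_Int_Diff[OF finA, of B] card_Int_Diff[OF finB, of A]
    by (simp add: Int_commute)
  then obtain f where f: "bij_betw f (B - A) (A - B)"
    using finite_same_card_bij[of "B - A" "A - B"] finA finB by auto
  have "(\<Sum>t\<in>B - A. ?w t) \<le> (\<Sum>t\<in>B - A. ?w (f t))"
  proof (rule sum_mono)
    fix x assume "x \<in> B - A"
    then have "x \<in> I - A" "f x \<in> A" using f BI by (auto dest: bij_betwE)
    then show "?w x \<le> ?w (f x)" using top \<beta> by (simp add: divide_right_mono)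
  qed
  also have "\<dots> = (\<Sum>t\<in>A - B. ?w t)" using f by (rule sum.reindex_bij_betw)
  finally have "(\<Sum>t\<in>B \<inter> A. ?w t) + (\<Sum>t\<in>B - A. ?w t) \<le> (\<Sum>t\<in>A \<inter> B. ?w t) + (\<Sum>t\<in>A - B. ?w t)"
    by (simp add: Int_commute)
  then show ?thesis
    using sum.Int_Diff[OF finA, where g="?w" and B=B] sum.Int_Diff[OF finB, where g="?w" and B=A]
    unfolding exp_weight_def by linarith
qed

lemma card_le_exp_weight:
  assumes "\<beta> > 0" "\<forall>t\<in>A. 0 \<le> v t"
  shows "real (card A) \<le> exp_weight \<beta> v A"
proof (cases "finite A")
  case True
  have "(\<Sum>t\<in>A. 1) \<le> exp_weight \<beta> v A"
    unfolding exp_weight_def using assms by (intro sum_mono) simp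
  then show ?thesis by simp
qed (simp add: exp_weight_def)

lemma user_welfare_eq:
  assumes "\<beta> > 0" "finite I" "K \<ge> 1"
  shows "user_welfare \<beta> K I v d =
    (\<Sum>A\<in>top_slates K I v d. \<beta> * ln (exp_weight \<beta> v A)) / card (top_slates K I v d)
      + (\<integral>e. e \<partial>gumbel \<beta>)"
proof -
  let ?T = "top_slates K I v d"
  have T: "finite ?T" "?T \<noteq> {}"
    using assms by (simp_all add: finite_top_slates top_slates_nonempty)
  have "user_welfare \<beta> K I v d = (\<Sum>A\<in>?T. \<beta> * ln (exp_weight \<beta> v A) + (\<integral>e. e \<partial>gumbel \<beta>)) / card ?T"
    unfolding user_welfare_def integral_pmf_of_set[OF T(2,1)]
    using assms top_slates_subset[OF \<open>K \<ge> 1\<close>]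
    by (intro arg_cong2[where f="(/)"] sum.cong refl integral_noise_Max) auto
  also have "\<dots> = (\<Sum>A\<in>?T. \<beta> * ln (exp_weight \<beta> v A)) / card ?T + (\<integral>e. e \<partial>gumbel \<beta>)"
    using T by (simp add: sum.distrib add_divide_distrib card_gt_0_iff)
  finally show ?thesis .
qed

lemma user_util_eq:
  assumes "\<beta> > 0" "finite I" "K \<ge> 1"
  shows "user_util \<beta> K I v d i =
    (\<Sum>A\<in>top_slates K I v d. logit_prob \<beta> v A i * (\<beta> * ln (exp_weight \<beta> v A) + (\<integral>e. e \<partial>gumbel \<beta>)))
      / card (top_slates K I v d)"
proof -
  let ?T = "top_slates K I v d"
  have T: "finite ?T" "?T \<noteq> {}"
    using assms by (simp_all add: finite_top_slates top_slates_nonempty)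
  show ?thesis
    unfolding user_util_def integral_pmf_of_set[OF T(2,1)]
    using assms top_slates_subset[OF \<open>K \<ge> 1\<close>]
    by (intro arg_cong2[where f="(/)"] sum.cong refl integral_noise_chosen_value) auto
qed

section \<open>Removing one item from the slate\<close>

text \<open>If \<open>i\<close> is on a top slate \<open>A\<close>, its place on the new slate is taken by the best item not
  on \<open>A\<close>, or by the default item when no such item is left; either way the new item has weight
  at least \<open>1\<close>.\<close>

lemma exp_weight_top_slate_remove:
  assumes \<beta>: "\<beta> > 0" and "finite I" "d \<notin> I" "\<forall>t\<in>I. 0 \<le> v t" "v d = 0" "K \<le> card I"
    and A: "A \<in> top_slates K I v d" and "i \<in> A" and A': "A' \<in> top_slates K (I - {i}) v d"
  shows "exp_weight \<beta> v A - exp (v i / \<beta>) + 1 \<le> exp_weight \<beta> v A'"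
proof -
  have AI: "A \<subseteq> I" "card A = K" "\<forall>a\<in>A. \<forall>b\<in>I - A. v b \<le> v a"
    using A \<open>K \<le> card I\<close> by (auto simp: top_slates_def)
  have finA: "finite A" using AI(1) \<open>finite I\<close> finite_subset by auto
  have "i \<in> I" using AI(1) \<open>i \<in> A\<close> by auto
  have rest: "exp_weight \<beta> v A - exp (v i / \<beta>) = exp_weight \<beta> v (A - {i})"
    unfolding exp_weight_def using finA \<open>i \<in> A\<close> by (simp add: sum.remove)
  show ?thesis
  proof (cases "K \<le> card (I - {i})")
    case True
    then have A'I: "A' \<subseteq> I - {i}" "card A' = K" "\<forall>a\<in>A'. \<forall>b\<in>(I - {i}) - A'. v b \<le> v a"
      using A' by (auto simp: top_slates_def)
    have "card I > 0" using \<open>i \<in> I\<close> \<open>finite I\<close> card_gt_0_iff by blast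
    then have "card A < card I" using True AI(2) \<open>i \<in> I\<close> \<open>finite I\<close> by (simp add: card_Diff_singleton)
    then have "\<not> I \<subseteq> A" using card_mono[OF finA, of I] by auto
    then obtain j where j: "j \<in> I" "j \<notin> A" by auto
    define B where "B = insert j (A - {i})"
    have "card A > 0" using finA \<open>i \<in> A\<close> card_gt_0_iff by blast
    then have "B \<subseteq> I - {i}" "card B = K"
      using AI \<open>i \<in> A\<close> j finA by (auto simp: B_def card_Diff_singleton)
    then have "exp_weight \<beta> v B \<le> exp_weight \<beta> v A'"
      using exp_weight_le_top[OF \<beta> _ A'I(1,3)] \<open>finite I\<close> A'I(2) by simp
    moreover have "exp_weight \<beta> v B = exp (v j / \<beta>) + exp_weight \<beta> v (A - {i})"
      unfolding B_def exp_weight_def using finA j by simp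
    moreover have "1 \<le> exp (v j / \<beta>)" using \<open>\<forall>t\<in>I. 0 \<le> v t\<close> j \<beta> by simp
    ultimately show ?thesis using rest by linarith
  next
    case False
    then have "K = card I" using \<open>K \<le> card I\<close> \<open>i \<in> I\<close> \<open>finite I\<close> by (simp add: card_Diff_singleton)
    then have "A = I" using card_subset_eq[OF \<open>finite I\<close> AI(1)] AI(2) by simp
    have "A' = insert d (I - {i})" using A' False by (simp add: top_slates_def)
    then have "exp_weight \<beta> v A' = 1 + exp_weight \<beta> v (I - {i})"
      unfolding exp_weight_def using \<open>finite I\<close> \<open>d \<notin> I\<close> \<open>v d = 0\<close> by simp
    then show ?thesis using rest \<open>A = I\<close> by simp
  qed
qed

lemma exp_weight_top_slate_le_remove:
  assumes \<beta>: "\<beta> > 0" and "finite I" "K \<le> card I"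
    and A: "A \<in> top_slates K I v d" and "i \<notin> A" and A': "A' \<in> top_slates K (I - {i}) v d"
  shows "exp_weight \<beta> v A \<le> exp_weight \<beta> v A'"
proof -
  have AI: "A \<subseteq> I - {i}" "card A = K"
    using A \<open>K \<le> card I\<close> \<open>i \<notin> A\<close> by (auto simp: top_slates_def)
  then have "K \<le> card (I - {i})" using card_mono[of "I - {i}" A] \<open>finite I\<close> by simp
  then have "A' \<subseteq> I - {i}" "card A' = K" "\<forall>a\<in>A'. \<forall>b\<in>(I - {i}) - A'. v b \<le> v a"
    using A' by (auto simp: top_slates_def)
  then show ?thesis
    using exp_weight_le_top[OF \<beta> _ _ _ AI(1)] AI(2) \<open>finite I\<close> by simp
qed

lemma slate_welfare_loss_le:
  assumes \<beta>: "\<beta> > 0" and K: "1 \<le> K" "K \<le> card I" and "finite I" "d \<notin> I"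
    and v: "\<forall>t\<in>I. 0 \<le> v t \<and> v t \<le> 1" "v d = 0" and "\<mu> \<ge> 0"
    and A: "A \<in> top_slates K I v d" and A': "A' \<in> top_slates K (I - {i}) v d"
  shows "\<beta> * ln (exp_weight \<beta> v A) - logit_prob \<beta> v A i * (\<beta> * ln (exp_weight \<beta> v A) + \<mu>) / c_const \<beta> K
      \<le> \<beta> * ln (exp_weight \<beta> v A')"
proof -
  define S where "S = exp_weight \<beta> v A"
  have AI: "A \<subseteq> I" "card A = K" using A K by (auto simp: top_slates_def)
  then have "finite A" "A \<noteq> {}" using \<open>finite I\<close> K finite_subset by auto
  then have "S > 0" unfolding S_def by (rule exp_weight_pos)
  show ?thesis
  proof (cases "i \<in> A")
    case True
    define a where "a = exp (v i / \<beta>)"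
    have "i \<in> I" using AI True by auto
    then have "1 \<le> a" "a \<le> exp (1 / \<beta>)" using v \<beta> by (simp_all add: a_def divide_right_mono)
    have "S - a = exp_weight \<beta> v (A - {i})"
      unfolding S_def a_def exp_weight_def using \<open>finite A\<close> True by (simp add: sum.remove)
    also have "real (card (A - {i})) \<le> \<dots>"
      using AI v by (intro card_le_exp_weight[OF \<beta>]) auto
    finally have "S - a \<ge> real K - 1" using True AI \<open>finite A\<close> K by (simp add: of_nat_diff)
    have W: "S - a + 1 \<le> exp_weight \<beta> v A'"
      using exp_weight_top_slate_remove[OF \<beta> \<open>finite I\<close> \<open>d \<notin> I\<close> _ v(2) K(2) A True A'] v
      by (simp add: S_def a_def)
    have "\<beta> * ln S - \<beta> * ln (exp_weight \<beta> v A') \<le> a / S * (\<beta> * ln S + \<mu>) / c_const \<beta> K"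
      using ln_weight_drop_le[OF \<beta> K(1) \<open>1 \<le> a\<close> \<open>a \<le> exp (1 / \<beta>)\<close> \<open>S - a \<ge> real K - 1\<close> W \<open>\<mu> \<ge> 0\<close>] .
    then show ?thesis using True by (simp add: S_def a_def logit_prob_def)
  next
    case False
    have "S \<le> exp_weight \<beta> v A'"
      unfolding S_def using exp_weight_top_slate_le_remove[OF \<beta> \<open>finite I\<close> K(2) A False A'] .
    then show ?thesis using False \<open>S > 0\<close> \<beta> by (simp add: S_def logit_prob_def)
  qed
qed

lemma mean_diff_le_mean:
  fixes f g h :: "'a \<Rightarrow> real"
  assumes "finite X" "X \<noteq> {}" "finite Y" "Y \<noteq> {}"
    and le: "\<And>x y. x \<in> X \<Longrightarrow> y \<in> Y \<Longrightarrow> f x - g x \<le> h y"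
  shows "(\<Sum>x\<in>X. f x) / card X - (\<Sum>x\<in>X. g x) / card X \<le> (\<Sum>y\<in>Y. h y) / card Y"
proof -
  define m where "m = (\<Sum>x\<in>X. f x - g x) / card X"
  have "card X > 0" "card Y > 0" using assms by (simp_all add: card_gt_0_iff)
  have "m \<le> h y" if "y \<in> Y" for y
    using sum_bounded_above[of X "\<lambda>x. f x - g x" "h y"] le that \<open>card X > 0\<close>
    by (simp add: m_def pos_divide_le_eq mult.commute)
  then have "card Y * m \<le> (\<Sum>y\<in>Y. h y)" using sum_bounded_below[of Y m h] by simp
  then have "m \<le> (\<Sum>y\<in>Y. h y) / card Y" using \<open>card Y > 0\<close> by (simp add: pos_le_divide_eq mult.commute)
  then show ?thesis by (simp add: m_def sum_subtractf diff_divide_distrib)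
qed

lemma user_welfare_loss_le:
  assumes \<beta>: "\<beta> > 0" and K: "1 \<le> K" "K \<le> card I" and I: "finite I" "d \<notin> I"
    and v: "\<forall>t\<in>I. 0 \<le> v t \<and> v t \<le> 1" "v d = 0"
  shows "user_welfare \<beta> K I v d - user_welfare \<beta> K (I - {i}) v d \<le> user_util \<beta> K I v d i / c_const \<beta> K"
proof -
  define \<mu> where "\<mu> = (\<integral>e. e \<partial>gumbel \<beta>)"
  let ?T = "top_slates K I v d" and ?T' = "top_slates K (I - {i}) v d"
  let ?\<phi> = "\<lambda>A. \<beta> * ln (exp_weight \<beta> v A)"
  let ?u = "\<lambda>A. logit_prob \<beta> v A i * (?\<phi> A + \<mu>) / c_const \<beta> K"
  have "(\<Sum>A\<in>?T. ?\<phi> A) / card ?T - (\<Sum>A\<in>?T. ?u A) / card ?T \<le> (\<Sum>A'\<in>?T'. ?\<phi> A') / card ?T'"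
    using slate_welfare_loss_le[OF \<beta> K I v] gumbel_mean_nonneg[OF \<beta>] I
    by (intro mean_diff_le_mean) (simp_all add: finite_top_slates top_slates_nonempty \<mu>_def)
  moreover have "user_welfare \<beta> K I v d = (\<Sum>A\<in>?T. ?\<phi> A) / card ?T + \<mu>"
    "user_welfare \<beta> K (I - {i}) v d = (\<Sum>A'\<in>?T'. ?\<phi> A') / card ?T' + \<mu>"
    using \<beta> I K by (simp_all add: user_welfare_eq \<mu>_def)
  moreover have "user_util \<beta> K I v d i / c_const \<beta> K = (\<Sum>A\<in>?T. ?u A) / card ?T"
    using \<beta> I K by (simp add: user_util_eq \<mu>_def sum_divide_distrib[symmetric] mult.commute)
  ultimately show ?thesis by linarith
qed

theorem lemma3:
  fixes \<sigma> :: "real ^ 'd \<Rightarrow> real ^ 'd \<Rightarrow> real"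
    and x :: "nat \<Rightarrow> real ^ 'd" and m :: nat
    and S :: "nat \<Rightarrow> (real ^ 'd) set" and s :: "nat \<Rightarrow> real ^ 'd"
    and n K i :: nat and \<beta> :: real
  assumes "\<beta> > 0" and "1 \<le> K" and "K \<le> n"
    and "\<And>a y. 0 \<le> \<sigma> a y \<and> \<sigma> a y \<le> 1"
    and "\<And>k. k < n \<Longrightarrow> s k \<in> S k"
    and "i < n"
  shows "welfare \<sigma> \<beta> K m x n s {..<n} - welfare \<sigma> \<beta> K m x n s ({..<n} - {i})
           \<le> utility \<sigma> \<beta> K m x n s i / c_const \<beta> K"
proof -
  have "welfare \<sigma> \<beta> K m x n s {..<n} - welfare \<sigma> \<beta> K m x n s ({..<n} - {i}) =
      (\<Sum>j<m. user_welfare \<beta> K {..<n} (relv \<sigma> n s (x j)) n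
             - user_welfare \<beta> K ({..<n} - {i}) (relv \<sigma> n s (x j)) n)"
    unfolding welfare_def by (simp add: sum_subtractf)
  also have "\<dots> \<le> (\<Sum>j<m. user_util \<beta> K {..<n} (relv \<sigma> n s (x j)) n i / c_const \<beta> K)"
    using assms(1-4) by (intro sum_mono user_welfare_loss_le) (auto simp: relv_def)
  also have "\<dots> = utility \<sigma> \<beta> K m x n s i / c_const \<beta> K"
    unfolding utility_def by (simp add: sum_divide_distrib)
  finally show ?thesis .
qed

end
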